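(* Let $R$ be a commutative ring and $S$ a finite multiplicative subset of $R$. The following are equivalent: (1) $R$ is a $u$-$S$-coherent ring; (2) $R$ is an $S$-coherent ring; (3) $R$ is a $c$-$S$-coherent ring.
   Context: A multiplicative subset $S$ contains $1$ and is closed under products. $M$ is $S$-finite if there are $s\in S$ and a finitely generated submodule $F\subseteq M$ with $sM\subseteq F$ (with respect to $s$). $M$ is $u$-$S$-finitely presented with respect to $s$ if there is an exact sequence $0\to T_1\to F\to M\to T_2\to 0$ with $F$ finitely presented and $sT_1=sT_2=0$. $R$ is $u$-$S$-coherent if there is $s\in S$ such that $R$ is $S$-finite with respect to $s$ and every finitely generated ideal is $u$-$S$-finitely presented with respect to $s$. $M$ is $S$-finitely presented if there is an exact sequence $0\to K\to F\to M\to 0$ with $F$ finitely generated free and $K$ $S$-finite; $M$ is $c$-$S$-finitely presented if there are $s\in S$ and a finitely presented submodule $N\subseteq M$ with $sM\subseteq N$. $R$ is $S$-coherent (resp. $c$-$S$-coherent) if every finitely generated ideal of $R$ is $S$-finitely presented (resp. $c$-$S$-finitely presented). *)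

theory Defs
  imports Main
begin

text \<open>Setting: R is the commutative ring given by the type 'a (class comm_ring_1, R = UNIV).
  Modules occurring in the definitions are either ideals of R (subsets of 'a) or
  submodules of the finitely generated free module R^n, represented as functions
  nat \<Rightarrow> 'a vanishing from index n on.\<close>

definition mult_subset :: "'a::comm_ring_1 set \<Rightarrow> bool" where
  "mult_subset S \<longleftrightarrow> 1 \<in> S \<and> (\<forall>s\<in>S. \<forall>t\<in>S. s * t \<in> S)"

definition is_ideal :: "'a::comm_ring_1 set \<Rightarrow> bool" where
  "is_ideal I \<longleftrightarrow> 0 \<in> I \<and> (\<forall>x\<in>I. \<forall>y\<in>I. x + y \<in> I) \<and> (\<forall>r. \<forall>x\<in>I. r * x \<in> I)"

definition ideal_gen :: "'a::comm_ring_1 set \<Rightarrow> 'a set" where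
  "ideal_gen A = {x. \<exists>c. x = (\<Sum>a\<in>A. c a * a)}"

definition fg_ideal :: "'a::comm_ring_1 set \<Rightarrow> bool" where
  "fg_ideal I \<longleftrightarrow> (\<exists>A. finite A \<and> A \<subseteq> I \<and> I = ideal_gen A)"

definition freemod :: "nat \<Rightarrow> (nat \<Rightarrow> 'a::comm_ring_1) set" where
  "freemod n = {x. \<forall>i\<ge>n. x i = 0}"

definition smult_vec :: "'a::comm_ring_1 \<Rightarrow> (nat \<Rightarrow> 'a) \<Rightarrow> (nat \<Rightarrow> 'a)" where
  "smult_vec r x = (\<lambda>i. r * x i)"

definition lin_span :: "(nat \<Rightarrow> 'a::comm_ring_1) set \<Rightarrow> (nat \<Rightarrow> 'a) set" where
  "lin_span G = {x. \<exists>c. \<forall>i. x i = (\<Sum>g\<in>G. c g * g i)}"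

definition submod :: "nat \<Rightarrow> (nat \<Rightarrow> 'a::comm_ring_1) set \<Rightarrow> bool" where
  "submod n K \<longleftrightarrow> K \<subseteq> freemod n \<and> (\<lambda>i. 0) \<in> K \<and>
     (\<forall>x\<in>K. \<forall>y\<in>K. (\<lambda>i. x i + y i) \<in> K) \<and> (\<forall>r. \<forall>x\<in>K. smult_vec r x \<in> K)"

definition fg_submod :: "(nat \<Rightarrow> 'a::comm_ring_1) set \<Rightarrow> bool" where
  "fg_submod K \<longleftrightarrow> (\<exists>G. finite G \<and> G \<subseteq> K \<and> K = lin_span G)"

definition S_finite_wrt :: "'a::comm_ring_1 \<Rightarrow> (nat \<Rightarrow> 'a) set \<Rightarrow> bool" where
  "S_finite_wrt s K \<longleftrightarrow> (\<exists>G. finite G \<and> G \<subseteq> K \<and> (\<forall>x\<in>K. smult_vec s x \<in> lin_span G))"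

definition ring_S_finite_wrt :: "'a::comm_ring_1 \<Rightarrow> bool" where
  "ring_S_finite_wrt s \<longleftrightarrow> (\<exists>A. finite A \<and> (\<forall>r::'a. s * r \<in> ideal_gen A))"

definition lmap :: "nat \<Rightarrow> (nat \<Rightarrow> 'a::comm_ring_1) \<Rightarrow> (nat \<Rightarrow> 'a) \<Rightarrow> 'a" where
  "lmap n a x = (\<Sum>i<n. x i * a i)"

definition lker :: "nat \<Rightarrow> (nat \<Rightarrow> 'a::comm_ring_1) \<Rightarrow> (nat \<Rightarrow> 'a) set" where
  "lker n a = {x \<in> freemod n. lmap n a x = 0}"

definition S_fp_ideal :: "'a::comm_ring_1 set \<Rightarrow> 'a set \<Rightarrow> bool" where
  "S_fp_ideal S I \<longleftrightarrow> (\<exists>n a. lmap n a ` freemod n = I \<and> (\<exists>s\<in>S. S_finite_wrt s (lker n a)))"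

definition fp_ideal :: "'a::comm_ring_1 set \<Rightarrow> bool" where
  "fp_ideal N \<longleftrightarrow> (\<exists>n a. lmap n a ` freemod n = N \<and> fg_submod (lker n a))"

definition c_S_fp_ideal :: "'a::comm_ring_1 set \<Rightarrow> 'a set \<Rightarrow> bool" where
  "c_S_fp_ideal S I \<longleftrightarrow> (\<exists>s\<in>S. \<exists>N. is_ideal N \<and> N \<subseteq> I \<and> fp_ideal N \<and> (\<forall>x\<in>I. s * x \<in> N))"

text \<open>u-S-finitely presented ideal w.r.t. s: exact 0 \<rightarrow> T1 \<rightarrow> F \<rightarrow> I \<rightarrow> T2 \<rightarrow> 0 with
  F finitely presented and s T1 = s T2 = 0.  F is taken in presented form F = R^m / K
  with K a finitely generated submodule of R^m; a map F \<rightarrow> I is a map g = lmap m a : R^m \<rightarrow> I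
  (a i \<in> I) with K \<subseteq> ker g.  Then T1 = ker g / K and T2 = I / im g.\<close>
definition u_S_fp_ideal_wrt :: "'a::comm_ring_1 \<Rightarrow> 'a set \<Rightarrow> bool" where
  "u_S_fp_ideal_wrt s I \<longleftrightarrow> (\<exists>m K a. submod m K \<and> fg_submod K \<and> (\<forall>i<m. a i \<in> I) \<and>
      K \<subseteq> lker m a \<and> (\<forall>x\<in>lker m a. smult_vec s x \<in> K) \<and>
      (\<forall>y\<in>I. s * y \<in> lmap m a ` freemod m))"

definition u_S_coherent :: "'a::comm_ring_1 set \<Rightarrow> bool" where
  "u_S_coherent S \<longleftrightarrow> (\<exists>s\<in>S. ring_S_finite_wrt s \<and>
      (\<forall>I::'a set. is_ideal I \<and> fg_ideal I \<longrightarrow> u_S_fp_ideal_wrt s I))"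

definition S_coherent :: "'a::comm_ring_1 set \<Rightarrow> bool" where
  "S_coherent S \<longleftrightarrow> (\<forall>I::'a set. is_ideal I \<and> fg_ideal I \<longrightarrow> S_fp_ideal S I)"

definition c_S_coherent :: "'a::comm_ring_1 set \<Rightarrow> bool" where
  "c_S_coherent S \<longleftrightarrow> (\<forall>I::'a set. is_ideal I \<and> fg_ideal I \<longrightarrow> c_S_fp_ideal S I)"

end

theory Submission
  imports Defs
begin

text \<open>A finite multiplicative subset S contains an idempotent e, namely a suitable power of the
  product of all its elements, and e is a multiple of every element of S. Passing from s to the
  multiple e weakens none of the three conditions, so each of them is equivalent to: every finitely
  generated ideal I receives a map R^m \<rightarrow> I whose cokernel is killed by e and whose kernel is
  S-finite with respect to e. Conversely, such a map can be improved using the splitting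
  R = eR \<times> (1 - e)R: scaling its coefficients by e gives a finitely presented ideal N \<subseteq> I with
  eI \<subseteq> N (the kernel only gains the unit vectors scaled by 1 - e), and adjoining the generators
  of I scaled by 1 - e gives a surjection onto I whose kernel is still S-finite with respect to e.\<close>

definition unit_vec :: "nat \<Rightarrow> nat \<Rightarrow> 'a::comm_ring_1" where
  "unit_vec i = (\<lambda>j. of_bool (j = i))"

lemma lmap_add: "lmap n a (\<lambda>i. x i + y i) = lmap n a x + lmap n a y"
  unfolding lmap_def by (simp add: sum.distrib distrib_right)

lemma lmap_smult_vec: "lmap n a (smult_vec r x) = r * lmap n a x"
  unfolding lmap_def smult_vec_def by (simp add: sum_distrib_left mult.assoc)

lemma lmap_scale_coeffs: "lmap n (\<lambda>i. r * a i) x = r * lmap n a x"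
  unfolding lmap_def by (simp add: sum_distrib_left mult.left_commute)

lemma lmap_zero: "lmap n a (\<lambda>i. 0) = 0"
  unfolding lmap_def by simp

lemma lmap_cong: "(\<And>i. i < n \<Longrightarrow> x i = y i) \<Longrightarrow> lmap n a x = lmap n a y"
  unfolding lmap_def by (rule sum.cong) auto

lemma lmap_unit_vec: "i < n \<Longrightarrow> lmap n a (unit_vec i) = a i"
  unfolding lmap_def unit_vec_def by simp

lemma lmap_append:
  "lmap (m + k) (\<lambda>i. if i < m then a i else b (i - m)) x = lmap m a x + lmap k b (\<lambda>j. x (m + j))"
proof -
  have split: "(\<Sum>i<m + k. f i) = (\<Sum>i<m. f i) + (\<Sum>j<k. f (m + j))" for f :: "nat \<Rightarrow> 'a"
    by (induct k) (simp_all add: ac_simps)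
  show ?thesis
    unfolding lmap_def split by simp
qed

lemma unit_vec_in_freemod: "i < n \<Longrightarrow> smult_vec c (unit_vec i) \<in> freemod n"
  unfolding freemod_def smult_vec_def unit_vec_def by auto

lemma submod_freemod: "submod n (freemod n)"
  unfolding submod_def freemod_def smult_vec_def by auto

lemma submod_lker: "submod n (lker n a)"
  using submod_freemod[of n]
  by (auto simp: submod_def lker_def lmap_add lmap_smult_vec lmap_zero)

lemma vec_sum_closed:
  assumes "(\<lambda>i. 0) \<in> K" "\<forall>x\<in>K. \<forall>y\<in>K. (\<lambda>i. x i + y i) \<in> K"
    and "finite J" "\<forall>j\<in>J. f j \<in> K"
  shows "(\<lambda>i. \<Sum>j\<in>J. f j i) \<in> K"
  using assms(3,4) by (induct J rule: finite_induct) (use assms(1,2) in auto)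

lemma lin_span_zero: "(\<lambda>i. 0) \<in> lin_span G"
  unfolding lin_span_def by (auto intro!: exI[of _ "\<lambda>g. 0"])

lemma lin_span_add: "x \<in> lin_span G \<Longrightarrow> y \<in> lin_span G \<Longrightarrow> (\<lambda>i. x i + y i) \<in> lin_span G"
  unfolding lin_span_def
  by (clarsimp, rename_tac c d, rule_tac x="\<lambda>g. c g + d g" in exI)
     (simp add: sum.distrib distrib_right)

lemma lin_span_smult_vec: "x \<in> lin_span G \<Longrightarrow> smult_vec r x \<in> lin_span G"
  unfolding lin_span_def smult_vec_def
  by (clarsimp, rename_tac c, rule_tac x="\<lambda>g. r * c g" in exI)
     (simp add: sum_distrib_left mult.assoc)

lemma lin_span_sum: "finite J \<Longrightarrow> \<forall>j\<in>J. f j \<in> lin_span G \<Longrightarrow> (\<lambda>i. \<Sum>j\<in>J. f j i) \<in> lin_span G"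
  by (rule vec_sum_closed) (auto intro: lin_span_zero lin_span_add)

lemma lin_span_superset: "finite G \<Longrightarrow> G \<subseteq> lin_span G"
proof
  fix g assume "finite G" "g \<in> G"
  then have "g i = (\<Sum>h\<in>G. of_bool (h = g) * h i)" for i
    by simp
  then show "g \<in> lin_span G"
    unfolding lin_span_def by (intro CollectI exI allI)
qed

lemma lin_span_subset_submod:
  assumes "finite G" "G \<subseteq> K" "submod n K"
  shows "lin_span G \<subseteq> K"
proof
  fix x assume "x \<in> lin_span G"
  then obtain c where "x = (\<lambda>i. \<Sum>g\<in>G. smult_vec (c g) g i)"
    by (auto simp: lin_span_def smult_vec_def)
  also have "\<dots> \<in> K"
    using assms by (intro vec_sum_closed) (auto simp: submod_def)
  finally show "x \<in> K" .
qed

lemma lin_span_mono: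
  assumes "finite H" "G \<subseteq> H"
  shows "lin_span G \<subseteq> lin_span H"
proof
  fix x assume "x \<in> lin_span G"
  then obtain c where "x = (\<lambda>i. \<Sum>g\<in>G. smult_vec (c g) g i)"
    by (auto simp: lin_span_def smult_vec_def)
  also have "\<dots> \<in> lin_span H"
    using assms lin_span_superset[OF assms(1)]
    by (intro lin_span_sum) (auto intro: lin_span_smult_vec finite_subset)
  finally show "x \<in> lin_span H" .
qed

lemma submod_lin_span: "finite G \<Longrightarrow> G \<subseteq> freemod n \<Longrightarrow> submod n (lin_span G)"
  using lin_span_subset_submod[OF _ _ submod_freemod]
  by (auto simp: submod_def intro: lin_span_zero lin_span_add lin_span_smult_vec)

lemma restriction_in_lin_span:
  assumes "finite A" "finite H" "(\<lambda>i. smult_vec c (unit_vec i)) ` A \<subseteq> H"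
  shows "(\<lambda>j. if j \<in> A then c * x j else 0) \<in> lin_span H"
proof -
  have "(\<lambda>j. if j \<in> A then c * x j else 0) =
      (\<lambda>j. \<Sum>i\<in>A. smult_vec (x i) (smult_vec c (unit_vec i)) j)"
    using assms(1)
    by (simp add: smult_vec_def unit_vec_def of_bool_def if_distrib if_distribR mult.commute
        cong: if_cong)
  also have "\<dots> \<in> lin_span H"
    using assms lin_span_superset[OF assms(2)]
    by (intro lin_span_sum) (auto intro: lin_span_smult_vec)
  finally show ?thesis .
qed

lemma ideal_sum:
  assumes "is_ideal I" "finite F" "\<forall>j\<in>F. f j \<in> I"
  shows "sum f F \<in> I"
  using assms(2,3) by (induct F rule: finite_induct) (use assms(1) in \<open>auto simp: is_ideal_def\<close>)

lemma ideal_mult: "is_ideal I \<Longrightarrow> x \<in> I \<Longrightarrow> r * x \<in> I"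
  unfolding is_ideal_def by blast

lemma lmap_in_ideal: "is_ideal I \<Longrightarrow> \<forall>i<n. a i \<in> I \<Longrightarrow> lmap n a x \<in> I"
  unfolding lmap_def by (auto intro: ideal_sum ideal_mult)

lemma is_ideal_lmap_image: "is_ideal (lmap n a ` freemod n)"
proof -
  have "(\<lambda>i. x i + y i) \<in> freemod n" if "x \<in> freemod n" "y \<in> freemod n" for x y
    using that by (simp add: freemod_def)
  moreover have "smult_vec r x \<in> freemod n" if "x \<in> freemod n" for x r
    using that by (simp add: freemod_def smult_vec_def)
  moreover have "0 \<in> lmap n a ` freemod n"
    by (rule image_eqI[where x="\<lambda>i. 0"]) (simp_all add: lmap_zero freemod_def)
  ultimately show ?thesis
    unfolding is_ideal_def by (auto simp flip: lmap_add lmap_smult_vec intro!: imageI)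
qed

lemma lmap_image_contains_coeffs: "i < n \<Longrightarrow> a i \<in> lmap n a ` freemod n"
  using unit_vec_in_freemod[of i n 1] by (auto simp: lmap_unit_vec smult_vec_def intro!: image_eqI)

lemma fg_ideal_imp_lmap_image:
  assumes "fg_ideal I"
  obtains k b where "lmap k b ` freemod k = I"
proof -
  obtain A where A: "finite A" "I = ideal_gen A"
    using assms by (auto simp: fg_ideal_def)
  define k where "k = card A"
  obtain b where b: "bij_betw b {..<k} A"
    using ex_bij_betw_nat_finite[OF A(1)] by (auto simp: k_def atLeast0LessThan)
  have sum_A: "(\<Sum>a\<in>A. c a * a) = (\<Sum>i<k. c (b i) * b i)" for c
    using sum.reindex_bij_betw[OF b, of "\<lambda>a. c a * a"] by simp
  have "lmap k b ` freemod k \<subseteq> ideal_gen A"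
  proof
    fix y assume "y \<in> lmap k b ` freemod k"
    then obtain x where "y = lmap k b x" by auto
    also have "\<dots> = (\<Sum>i<k. x (inv_into {..<k} b (b i)) * b i)"
      using b unfolding lmap_def by (intro sum.cong) (auto simp: bij_betw_def)
    also have "\<dots> = (\<Sum>a\<in>A. x (inv_into {..<k} b a) * a)"
      by (rule sum_A[symmetric])
    finally show "y \<in> ideal_gen A"
      unfolding ideal_gen_def by (intro CollectI exI)
  qed
  moreover have "ideal_gen A \<subseteq> lmap k b ` freemod k"
  proof
    fix y assume "y \<in> ideal_gen A"
    then obtain c where "y = (\<Sum>a\<in>A. c a * a)" by (auto simp: ideal_gen_def)
    also have "\<dots> = lmap k b (\<lambda>i. if i < k then c (b i) else 0)"
      unfolding sum_A lmap_def by simp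
    finally show "y \<in> lmap k b ` freemod k"
      by (auto simp: freemod_def)
  qed
  ultimately show ?thesis
    using that A(2) by blast
qed

lemma S_finite_wrt_dvd:
  assumes "S_finite_wrt s K" "s dvd t"
  shows "S_finite_wrt t K"
proof -
  obtain G where G: "finite G" "G \<subseteq> K" "\<forall>x\<in>K. smult_vec s x \<in> lin_span G"
    using assms(1) by (auto simp: S_finite_wrt_def)
  obtain u where "t = s * u"
    using assms(2) by (auto elim: dvdE)
  then have "smult_vec t x = smult_vec u (smult_vec s x)" for x
    by (simp add: smult_vec_def mult_ac)
  then show ?thesis
    unfolding S_finite_wrt_def using G lin_span_smult_vec by metis
qed

lemma fg_submod_imp_S_finite_wrt: "fg_submod K \<Longrightarrow> S_finite_wrt s K"
  unfolding fg_submod_def S_finite_wrt_def by (auto intro: lin_span_smult_vec)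

lemma power_idempotent_exists:
  fixes x :: "'a::monoid_mult"
  assumes "finite (range (\<lambda>n::nat. x ^ n))"
  obtains n where "n > 0" "x ^ n * x ^ n = x ^ n"
proof -
  have "\<not> inj (\<lambda>n::nat. x ^ n)"
    using assms finite_imageD by blast
  then obtain p q :: nat where "p < q" "x ^ p = x ^ q"
    unfolding inj_def by (metis linorder_neq_iff)
  define d where "d = q - p"
  have "d > 0" and q: "q = p + d"
    using \<open>p < q\<close> by (auto simp: d_def)
  have shift: "x ^ (j + d) = x ^ j" if "p \<le> j" for j
  proof -
    have "x ^ (j + d) = x ^ (j - p) * x ^ q"
      using that by (simp add: q flip: power_add)
    also have "\<dots> = x ^ j"
      using that by (simp add: \<open>x ^ p = x ^ q\<close>[symmetric] flip: power_add)
    finally show ?thesis .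
  qed
  have periodic: "x ^ (j + d * r) = x ^ j" if "p \<le> j" for j r
  proof (induct r)
    case (Suc r)
    have "x ^ (j + d * Suc r) = x ^ ((j + d * r) + d)"
      by (simp add: algebra_simps)
    also have "\<dots> = x ^ j"
      using that Suc by (subst shift) simp_all
    finally show ?case .
  qed simp
  define n where "n = d * (p + 1)"
  have "p \<le> d * p"
    using \<open>d > 0\<close> by simp
  then have "p < n"
    unfolding n_def distrib_left using \<open>d > 0\<close> by linarith
  then have "x ^ n * x ^ n = x ^ n"
    using periodic[of n "p + 1"] by (simp add: n_def flip: power_add)
  with \<open>p < n\<close> show ?thesis
    using that[of n] by simp
qed

lemma mult_subset_power: "mult_subset S \<Longrightarrow> x \<in> S \<Longrightarrow> x ^ n \<in> S"
  by (induct n) (auto simp: mult_subset_def)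

lemma mult_subset_prod:
  assumes "mult_subset S" "finite F" "F \<subseteq> S"
  shows "\<Prod>F \<in> S"
  using assms(2,3) by (induct F rule: finite_induct) (use assms(1) in \<open>auto simp: mult_subset_def\<close>)

lemma mult_subset_idempotent:
  assumes "mult_subset S" "finite S"
  obtains e where "e \<in> S" "e * e = e" "\<forall>t\<in>S. t dvd e"
proof -
  define s where "s = \<Prod>S"
  have "s \<in> S"
    unfolding s_def using assms by (simp add: mult_subset_prod)
  then have "range (\<lambda>n::nat. s ^ n) \<subseteq> S"
    using assms(1) mult_subset_power by blast
  then have "finite (range (\<lambda>n::nat. s ^ n))"
    using assms(2) finite_subset by blast
  then obtain n where "n > 0" "s ^ n * s ^ n = s ^ n"
    by (rule power_idempotent_exists)
  moreover have "t dvd s ^ n" if "t \<in> S" for t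
  proof -
    have "t dvd s"
      unfolding s_def using assms(2) that by (rule dvd_prodI)
    also have "s dvd s ^ n"
      using \<open>n > 0\<close> by simp
    finally show ?thesis .
  qed
  ultimately show ?thesis
    using that mult_subset_power[OF assms(1) \<open>s \<in> S\<close>] by blast
qed

definition presented_upto :: "'a::comm_ring_1 \<Rightarrow> 'a set \<Rightarrow> bool" where
  "presented_upto s I \<longleftrightarrow>
     (\<exists>m a. (\<forall>i<m. a i \<in> I) \<and> (\<forall>y\<in>I. s * y \<in> lmap m a ` freemod m) \<and>
       S_finite_wrt s (lker m a))"

lemma presented_uptoI:
  assumes "lmap n a ` freemod n \<subseteq> I" "\<forall>y\<in>I. s * y \<in> lmap n a ` freemod n"
    and "S_finite_wrt s (lker n a)"
  shows "presented_upto s I"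
proof -
  have "\<forall>i<n. a i \<in> I"
    using assms(1) lmap_image_contains_coeffs by blast
  then show ?thesis
    unfolding presented_upto_def using assms(2,3) by blast
qed

lemma presented_upto_dvd:
  assumes "presented_upto s I" "s dvd t"
  shows "presented_upto t I"
proof -
  obtain m a where a: "\<forall>i<m. a i \<in> I" "\<forall>y\<in>I. s * y \<in> lmap m a ` freemod m"
    and ker: "S_finite_wrt s (lker m a)"
    using assms(1) unfolding presented_upto_def by blast
  obtain u where t: "t = s * u"
    using assms(2) by (auto elim: dvdE)
  have "t * y \<in> lmap m a ` freemod m" if "y \<in> I" for y
  proof -
    obtain x where x: "x \<in> freemod m" "s * y = lmap m a x"
      using a(2) \<open>y \<in> I\<close> by blast
    have "t * y = u * (s * y)"
      by (simp add: t mult_ac)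
    also have "\<dots> = lmap m a (smult_vec u x)"
      by (simp add: x(2) lmap_smult_vec)
    finally have "t * y = lmap m a (smult_vec u x)" .
    moreover have "smult_vec u x \<in> freemod m"
      using x(1) by (simp add: freemod_def smult_vec_def)
    ultimately show ?thesis
      by blast
  qed
  then show ?thesis
    unfolding presented_upto_def using a(1) S_finite_wrt_dvd[OF ker assms(2)] by blast
qed

lemma u_S_fp_ideal_wrt_imp_presented_upto:
  assumes "u_S_fp_ideal_wrt s I"
  shows "presented_upto s I"
proof -
  obtain m K a where "fg_submod K" "\<forall>i<m. a i \<in> I" "K \<subseteq> lker m a"
    "\<forall>x\<in>lker m a. smult_vec s x \<in> K" "\<forall>y\<in>I. s * y \<in> lmap m a ` freemod m"
    using assms unfolding u_S_fp_ideal_wrt_def by blast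
  then show ?thesis
    unfolding presented_upto_def S_finite_wrt_def fg_submod_def by (metis order_trans)
qed

lemma presented_upto_imp_u_S_fp_ideal_wrt:
  assumes "presented_upto s I"
  shows "u_S_fp_ideal_wrt s I"
proof -
  obtain m a G where a: "\<forall>i<m. a i \<in> I" "\<forall>y\<in>I. s * y \<in> lmap m a ` freemod m"
    and G: "finite G" "G \<subseteq> lker m a" "\<forall>x\<in>lker m a. smult_vec s x \<in> lin_span G"
    using assms unfolding presented_upto_def S_finite_wrt_def by blast
  have "lin_span G \<subseteq> lker m a"
    using G(1,2) submod_lker by (rule lin_span_subset_submod)
  moreover have "submod m (lin_span G)"
    using G(1,2) by (intro submod_lin_span) (auto simp: lker_def)
  moreover have "fg_submod (lin_span G)"
    unfolding fg_submod_def using G(1) lin_span_superset by blast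
  ultimately show ?thesis
    unfolding u_S_fp_ideal_wrt_def using a G(3) by blast
qed

lemma S_fp_ideal_imp_presented_upto:
  assumes "is_ideal I" "S_fp_ideal S I"
  shows "\<exists>s\<in>S. presented_upto s I"
proof -
  obtain n a s where "lmap n a ` freemod n = I" "s \<in> S" "S_finite_wrt s (lker n a)"
    using assms(2) unfolding S_fp_ideal_def by blast
  moreover have "\<forall>y\<in>I. s * y \<in> I"
    using assms(1) ideal_mult by blast
  ultimately show ?thesis
    using presented_uptoI[of n a I s] by auto
qed

lemma c_S_fp_ideal_imp_presented_upto:
  assumes "c_S_fp_ideal S I"
  shows "\<exists>s\<in>S. presented_upto s I"
proof -
  obtain s N n a where "s \<in> S" "N \<subseteq> I" "\<forall>y\<in>I. s * y \<in> N"
    and "lmap n a ` freemod n = N" "fg_submod (lker n a)"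
    using assms unfolding c_S_fp_ideal_def fp_ideal_def by blast
  then show ?thesis
    using presented_uptoI[of n a I s] fg_submod_imp_S_finite_wrt by blast
qed

lemma idempotent_mult_complement: "e * e = e \<Longrightarrow> e * (1 - e) = (0::'a::comm_ring_1)"
  by (simp add: algebra_simps)

lemma lker_idempotent_scaled:
  fixes e :: "'a::comm_ring_1"
  assumes e: "e * e = e" and G: "finite G" "G \<subseteq> lker m a"
    and ker: "\<forall>x\<in>lker m a. smult_vec e x \<in> lin_span G"
  shows "lker m (\<lambda>i. e * a i) = lin_span (G \<union> (\<lambda>i. smult_vec (1 - e) (unit_vec i)) ` {..<m})"
    (is "_ = lin_span ?H")
proof
  have fin: "finite ?H"
    using G(1) by simp
  have "lker m a \<subseteq> lker m (\<lambda>i. e * a i)"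
    by (auto simp: lker_def lmap_scale_coeffs)
  moreover have "smult_vec (1 - e) (unit_vec i) \<in> lker m (\<lambda>i. e * a i)" if "i < m" for i
    using that idempotent_mult_complement[OF e] unit_vec_in_freemod[OF that]
    by (simp add: lker_def lmap_scale_coeffs lmap_smult_vec lmap_unit_vec mult.assoc[symmetric])
  ultimately have "?H \<subseteq> lker m (\<lambda>i. e * a i)"
    using G(2) by blast
  then show "lin_span ?H \<subseteq> lker m (\<lambda>i. e * a i)"
    by (rule lin_span_subset_submod[OF fin _ submod_lker])
  show "lker m (\<lambda>i. e * a i) \<subseteq> lin_span ?H"
  proof
    fix x assume x: "x \<in> lker m (\<lambda>i. e * a i)"
    have "smult_vec e x \<in> freemod m"
      using x by (simp add: lker_def freemod_def smult_vec_def)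
    moreover have "lmap m a (smult_vec e x) = 0"
      using x by (simp add: lker_def lmap_scale_coeffs lmap_smult_vec)
    ultimately have "smult_vec e (smult_vec e x) \<in> lin_span G"
      using ker by (simp add: lker_def)
    moreover have "smult_vec e (smult_vec e x) = smult_vec e x"
      unfolding smult_vec_def by (simp add: mult.assoc[symmetric] e)
    ultimately have ex: "smult_vec e x \<in> lin_span ?H"
      using lin_span_mono[OF fin, of G] by auto
    have rest: "(\<lambda>j. if j \<in> {..<m} then (1 - e) * x j else 0) \<in> lin_span ?H"
      using fin by (intro restriction_in_lin_span) auto
    have "x = (\<lambda>j. smult_vec e x j + (if j \<in> {..<m} then (1 - e) * x j else 0))"
      using x by (auto simp: lker_def freemod_def smult_vec_def algebra_simps)
    then show "x \<in> lin_span ?H"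
      using lin_span_add[OF ex rest] by simp
  qed
qed

lemma presented_upto_imp_c_S_fp_ideal:
  assumes "e \<in> S" "e * e = e" "is_ideal I" "presented_upto e I"
  shows "c_S_fp_ideal S I"
proof -
  obtain m a G where a: "\<forall>i<m. a i \<in> I" "\<forall>y\<in>I. e * y \<in> lmap m a ` freemod m"
    and G: "finite G" "G \<subseteq> lker m a" "\<forall>x\<in>lker m a. smult_vec e x \<in> lin_span G"
    using assms(4) unfolding presented_upto_def S_finite_wrt_def by blast
  define N where "N = lmap m (\<lambda>i. e * a i) ` freemod m"
  have "\<forall>i<m. e * a i \<in> I"
    using a(1) ideal_mult[OF assms(3)] by blast
  then have "N \<subseteq> I"
    unfolding N_def using lmap_in_ideal[OF assms(3)] by auto
  moreover have "e * y \<in> N" if "y \<in> I" for y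
  proof -
    obtain x where x: "x \<in> freemod m" "e * y = lmap m a x"
      using a(2) \<open>y \<in> I\<close> by blast
    have "e * y = e * (e * y)"
      by (simp add: mult.assoc[symmetric] assms(2))
    also have "\<dots> = lmap m (\<lambda>i. e * a i) x"
      by (simp add: x(2) lmap_scale_coeffs)
    finally show ?thesis
      unfolding N_def using x(1) by (rule image_eqI)
  qed
  moreover have "fp_ideal N"
  proof -
    let ?H = "G \<union> (\<lambda>i. smult_vec (1 - e) (unit_vec i)) ` {..<m}"
    have "lker m (\<lambda>i. e * a i) = lin_span ?H"
      using assms(2) G by (rule lker_idempotent_scaled)
    moreover have "finite ?H"
      using G(1) by simp
    ultimately have "fg_submod (lker m (\<lambda>i. e * a i))"
      unfolding fg_submod_def using lin_span_superset[of ?H] by (intro exI[of _ ?H]) simp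
    then show ?thesis
      unfolding fp_ideal_def N_def by blast
  qed
  moreover have "is_ideal N"
    unfolding N_def by (rule is_ideal_lmap_image)
  ultimately show ?thesis
    unfolding c_S_fp_ideal_def using assms(1) by blast
qed

definition idempotent_glue ::
    "'a::comm_ring_1 \<Rightarrow> nat \<Rightarrow> (nat \<Rightarrow> 'a) \<Rightarrow> (nat \<Rightarrow> 'a) \<Rightarrow> nat \<Rightarrow> 'a" where
  "idempotent_glue e m a b = (\<lambda>i. if i < m then e * a i else (1 - e) * b (i - m))"

lemma lmap_idempotent_glue:
  "lmap (m + k) (idempotent_glue e m a b) x = e * lmap m a x + (1 - e) * lmap k b (\<lambda>j. x (m + j))"
  unfolding idempotent_glue_def lmap_append[of m k "\<lambda>i. e * a i" "\<lambda>j. (1 - e) * b j"]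
  by (simp add: lmap_scale_coeffs)

lemma lmap_image_idempotent_glue:
  assumes e: "e * e = e" and I: "is_ideal I" and b: "lmap k b ` freemod k = I"
    and a: "\<forall>i<m. a i \<in> I" "\<forall>y\<in>I. e * y \<in> lmap m a ` freemod m"
  shows "lmap (m + k) (idempotent_glue e m a b) ` freemod (m + k) = I"
proof
  show "lmap (m + k) (idempotent_glue e m a b) ` freemod (m + k) \<subseteq> I"
  proof
    fix y assume "y \<in> lmap (m + k) (idempotent_glue e m a b) ` freemod (m + k)"
    then obtain x where x: "x \<in> freemod (m + k)" "y = lmap (m + k) (idempotent_glue e m a b) x"
      by blast
    have "(\<lambda>j. x (m + j)) \<in> freemod k"
      using x(1) by (simp add: freemod_def)
    then have "lmap k b (\<lambda>j. x (m + j)) \<in> I"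
      using b by blast
    moreover have "lmap m a x \<in> I"
      using I a(1) by (rule lmap_in_ideal)
    ultimately show "y \<in> I"
      using I by (simp add: x(2) lmap_idempotent_glue is_ideal_def)
  qed
  show "I \<subseteq> lmap (m + k) (idempotent_glue e m a b) ` freemod (m + k)"
  proof
    fix y assume "y \<in> I"
    obtain x1 where x1: "x1 \<in> freemod m" "e * y = lmap m a x1"
      using a(2) \<open>y \<in> I\<close> by blast
    obtain x2 where x2: "x2 \<in> freemod k" "y = lmap k b x2"
      using b \<open>y \<in> I\<close> by blast
    define x where "x = (\<lambda>i. if i < m then x1 i else x2 (i - m))"
    have "x \<in> freemod (m + k)"
      using x2(1) by (auto simp: freemod_def x_def)
    moreover have "lmap m a x = lmap m a x1"
      by (rule lmap_cong) (simp add: x_def)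
    moreover have "(\<lambda>j. x (m + j)) = x2"
      by (simp add: x_def)
    ultimately have
      "lmap (m + k) (idempotent_glue e m a b) x = e * lmap m a x1 + (1 - e) * lmap k b x2"
      by (simp add: lmap_idempotent_glue)
    also have "\<dots> = e * (e * y) + (1 - e) * y"
      by (simp only: x1(2)[symmetric] x2(2)[symmetric])
    also have "\<dots> = y"
      using e by (simp add: mult.assoc[symmetric] algebra_simps)
    finally show "y \<in> lmap (m + k) (idempotent_glue e m a b) ` freemod (m + k)"
      using \<open>x \<in> freemod (m + k)\<close> by (metis image_eqI)
  qed
qed

lemma lker_idempotent_glue_restrict:
  assumes e: "e * e = e" and x: "x \<in> lker (m + k) (idempotent_glue e m a b)"
  shows "(\<lambda>j. if j \<in> {..<m} then e * x j else 0) \<in> lker m a"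
    (is "?xl \<in> _")
proof -
  have "e * (e * lmap m a x + (1 - e) * lmap k b (\<lambda>j. x (m + j))) = 0"
    using x by (simp add: lker_def lmap_idempotent_glue)
  then have "e * lmap m a x = 0"
    using idempotent_mult_complement[OF e] by (simp add: distrib_left mult.assoc[symmetric] e)
  moreover have "lmap m a ?xl = lmap m a (smult_vec e x)"
    by (rule lmap_cong) (simp add: smult_vec_def)
  moreover have "?xl \<in> freemod m"
    by (simp add: freemod_def)
  ultimately show ?thesis
    by (simp add: lker_def lmap_smult_vec)
qed

lemma S_finite_lker_idempotent_glue:
  fixes e :: "'a::comm_ring_1"
  assumes e: "e * e = e" and ker: "S_finite_wrt e (lker m a)"
  shows "S_finite_wrt e (lker (m + k) (idempotent_glue e m a b))"
proof -
  obtain G where G: "finite G" "G \<subseteq> lker m a" "\<forall>x\<in>lker m a. smult_vec e x \<in> lin_span G"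
    using ker unfolding S_finite_wrt_def by blast
  let ?H = "G \<union> (\<lambda>i. smult_vec e (unit_vec i)) ` {m..<m + k}"
  have fin: "finite ?H"
    using G(1) by simp
  have "g \<in> lker (m + k) (idempotent_glue e m a b)" if "g \<in> lker m a" for g
  proof -
    have "g \<in> freemod (m + k)" and "(\<lambda>j. g (m + j)) = (\<lambda>j. 0)"
      using that by (auto simp: lker_def freemod_def)
    then show ?thesis
      using that by (simp add: lker_def lmap_idempotent_glue lmap_zero)
  qed
  moreover have "smult_vec e (unit_vec i) \<in> lker (m + k) (idempotent_glue e m a b)"
    if "m \<le> i" "i < m + k" for i
    using that idempotent_mult_complement[OF e] unit_vec_in_freemod[OF \<open>i < m + k\<close>]
    by (simp add: lker_def lmap_smult_vec lmap_unit_vec idempotent_glue_def mult.assoc[symmetric])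
  ultimately have H: "?H \<subseteq> lker (m + k) (idempotent_glue e m a b)"
    using G(2) by auto
  have "smult_vec e x \<in> lin_span ?H" if x: "x \<in> lker (m + k) (idempotent_glue e m a b)" for x
  proof -
    define xl where "xl = (\<lambda>j. if j \<in> {..<m} then e * x j else 0)"
    define xr where "xr = (\<lambda>j. if j \<in> {m..<m + k} then e * x j else 0)"
    have "smult_vec e xl \<in> lin_span G"
      using G(3) lker_idempotent_glue_restrict[OF e x] by (simp add: xl_def)
    moreover have "smult_vec e xl = xl"
      by (auto simp: xl_def smult_vec_def mult.assoc[symmetric] e)
    ultimately have "xl \<in> lin_span ?H"
      using lin_span_mono[OF fin, of G] by auto
    moreover have "xr \<in> lin_span ?H"
      unfolding xr_def using fin by (intro restriction_in_lin_span) auto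
    moreover have "smult_vec e x = (\<lambda>j. xl j + xr j)"
      using x by (auto simp: xl_def xr_def smult_vec_def lker_def freemod_def)
    ultimately show ?thesis
      by (simp add: lin_span_add)
  qed
  then show ?thesis
    unfolding S_finite_wrt_def using fin H by blast
qed

lemma presented_upto_imp_S_fp_ideal:
  assumes "e \<in> S" "e * e = e" "is_ideal I" "fg_ideal I" "presented_upto e I"
  shows "S_fp_ideal S I"
proof -
  obtain k b where b: "lmap k b ` freemod k = I"
    using assms(4) by (rule fg_ideal_imp_lmap_image)
  obtain m a where a: "\<forall>i<m. a i \<in> I" "\<forall>y\<in>I. e * y \<in> lmap m a ` freemod m"
    and ker: "S_finite_wrt e (lker m a)"
    using assms(5) unfolding presented_upto_def by blast
  show ?thesis
    unfolding S_fp_ideal_def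
    using lmap_image_idempotent_glue[OF assms(2,3) b a]
      S_finite_lker_idempotent_glue[OF assms(2) ker] assms(1) by blast
qed

lemma ring_S_finite_wrt_any: "ring_S_finite_wrt (s::'a::comm_ring_1)"
  unfolding ring_S_finite_wrt_def ideal_gen_def by (intro exI[of _ "{1}"]) auto

lemma u_S_coherent_iff_presented_upto:
  assumes "e \<in> S" "\<forall>t\<in>S. t dvd e"
  shows "u_S_coherent S \<longleftrightarrow> (\<forall>I. is_ideal I \<and> fg_ideal I \<longrightarrow> presented_upto e I)"
proof
  assume "u_S_coherent S"
  then obtain s where "s \<in> S" "\<forall>I. is_ideal I \<and> fg_ideal I \<longrightarrow> u_S_fp_ideal_wrt s I"
    unfolding u_S_coherent_def by blast
  then show "\<forall>I. is_ideal I \<and> fg_ideal I \<longrightarrow> presented_upto e I"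
    using assms(2) presented_upto_dvd u_S_fp_ideal_wrt_imp_presented_upto by blast
next
  assume "\<forall>I. is_ideal I \<and> fg_ideal I \<longrightarrow> presented_upto e I"
  then show "u_S_coherent S"
    unfolding u_S_coherent_def
    using assms(1) ring_S_finite_wrt_any presented_upto_imp_u_S_fp_ideal_wrt by blast
qed

lemma S_coherent_iff_presented_upto:
  assumes "e \<in> S" "e * e = e" "\<forall>t\<in>S. t dvd e"
  shows "S_coherent S \<longleftrightarrow> (\<forall>I. is_ideal I \<and> fg_ideal I \<longrightarrow> presented_upto e I)"
  unfolding S_coherent_def
  using assms S_fp_ideal_imp_presented_upto presented_upto_dvd presented_upto_imp_S_fp_ideal
  by meson

lemma c_S_coherent_iff_presented_upto:
  assumes "e \<in> S" "e * e = e" "\<forall>t\<in>S. t dvd e"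
  shows "c_S_coherent S \<longleftrightarrow> (\<forall>I. is_ideal I \<and> fg_ideal I \<longrightarrow> presented_upto e I)"
  unfolding c_S_coherent_def
  using assms c_S_fp_ideal_imp_presented_upto presented_upto_dvd presented_upto_imp_c_S_fp_ideal
  by meson

theorem proposition3p13:
  fixes S :: "'a::comm_ring_1 set"
  assumes "mult_subset S" and "finite S"
  shows "(u_S_coherent S \<longleftrightarrow> S_coherent S) \<and> (S_coherent S \<longleftrightarrow> c_S_coherent S)"
proof -
  obtain e where "e \<in> S" "e * e = e" "\<forall>t\<in>S. t dvd e"
    using mult_subset_idempotent[OF assms] by blast
  then show ?thesis
    by (simp add: u_S_coherent_iff_presented_upto S_coherent_iff_presented_upto
        c_S_coherent_iff_presented_upto)
qed

end
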